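(* Let $S$ be a monoid whose unique maximal right ideal $\mathfrak{M}$ is two-sided, and let $A$ be a right $S$-act having a maximal subact $B$ such that there exists $a\in A\setminus B$ with $\mathfrak{M}=\{s\in S\mid as\in B\}$. Then: (1) for every proper right ideal $I$ of $S$ with $I^2=I$ we have $AI\not\cong A$ (as $S$-acts); (2) for every right ideal $I$ of $S$, $AI=A$ if and only if $I=S$; (3) for every right ideal $I$ of $S$ with $I^2=I$, $AI\cong A$ if and only if $I=S$.
   Context: $S$ is a monoid with identity $1$ having at least one right non-invertible element. A (right) $S$-act is a nonempty set with an action $(a,s)\mapsto as$, $a1=a$, $a(st)=(as)t$; a subact is a nonempty subset closed under the action; a maximal subact is a proper subact not properly contained in another proper subact. $\mathfrak{M}=\{s\in S\mid st\neq1\ \forall t\in S\}$ is the unique maximal right ideal. $AI=\{as\mid a\in A,s\in I\}$ (a subact of $A$), $I^2=\{st\mid s,t\in I\}$. Isomorphism means bijective map $f$ with $f(as)=f(a)s$. *)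

theory Defs
  imports Main
begin

text \<open>A right S-act: a nonempty carrier set A with an action act : 'b => 'a => 'b,
  where S is the whole type 'a (a monoid).\<close>
definition is_act :: "('b \<Rightarrow> 'a::monoid_mult \<Rightarrow> 'b) \<Rightarrow> 'b set \<Rightarrow> bool" where
  "is_act act A \<longleftrightarrow> A \<noteq> {} \<and> (\<forall>a\<in>A. \<forall>s. act a s \<in> A) \<and> (\<forall>a\<in>A. act a 1 = a)
     \<and> (\<forall>a\<in>A. \<forall>s t. act a (s * t) = act (act a s) t)"

definition subact :: "('b \<Rightarrow> 'a::monoid_mult \<Rightarrow> 'b) \<Rightarrow> 'b set \<Rightarrow> 'b set \<Rightarrow> bool" where
  "subact act B A \<longleftrightarrow> B \<noteq> {} \<and> B \<subseteq> A \<and> (\<forall>b\<in>B. \<forall>s. act b s \<in> B)"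

definition maximal_subact :: "('b \<Rightarrow> 'a::monoid_mult \<Rightarrow> 'b) \<Rightarrow> 'b set \<Rightarrow> 'b set \<Rightarrow> bool" where
  "maximal_subact act B A \<longleftrightarrow> subact act B A \<and> B \<noteq> A \<and>
     (\<forall>C. subact act C A \<and> C \<noteq> A \<and> B \<subseteq> C \<longrightarrow> C = B)"

definition right_ideal :: "'a::monoid_mult set \<Rightarrow> bool" where
  "right_ideal I \<longleftrightarrow> I \<noteq> {} \<and> (\<forall>s\<in>I. \<forall>t. s * t \<in> I)"

definition left_ideal :: "'a::monoid_mult set \<Rightarrow> bool" where
  "left_ideal I \<longleftrightarrow> I \<noteq> {} \<and> (\<forall>s\<in>I. \<forall>t. t * s \<in> I)"

text \<open>The set of right non-invertible elements, the unique maximal right ideal.\<close>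
definition maxRI :: "'a::monoid_mult set" where
  "maxRI = {s. \<forall>t. s * t \<noteq> 1}"

definition act_ideal :: "('b \<Rightarrow> 'a::monoid_mult \<Rightarrow> 'b) \<Rightarrow> 'b set \<Rightarrow> 'a set \<Rightarrow> 'b set" where
  "act_ideal act A I = {act a s | a s. a \<in> A \<and> s \<in> I}"

definition ideal_sq :: "'a::monoid_mult set \<Rightarrow> 'a set" where
  "ideal_sq I = {s * t | s t. s \<in> I \<and> t \<in> I}"

definition act_iso :: "('b \<Rightarrow> 'a::monoid_mult \<Rightarrow> 'b) \<Rightarrow> 'b set \<Rightarrow> 'b set \<Rightarrow> bool" where
  "act_iso act X Y \<longleftrightarrow> (\<exists>f. bij_betw f X Y \<and> (\<forall>x\<in>X. \<forall>s. f (act x s) = act (f x) s))"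

end

theory Submission
  imports Defs
begin

text \<open>Since \<open>B\<close> is maximal and \<open>a \<notin> B\<close>, the subact \<open>B \<union> aS\<close> is all of \<open>A\<close>. As \<open>\<M>\<close> is
  two-sided, \<open>aS\<M> \<subseteq> a\<M> \<subseteq> B\<close>, hence \<open>A\<M> \<subseteq> B \<noteq> A\<close>; every proper right ideal lies in
  \<open>\<M>\<close>, which gives (2). For an idempotent right ideal \<open>(AI)I = AI\<close>, and an isomorphism
  \<open>f : AI \<cong> A\<close> maps \<open>(AI)I\<close> onto \<open>AI\<close>; so \<open>A = f(AI) = f((AI)I) = AI\<close>, and (1) and (3)
  follow from (2).\<close>

lemma act_ideal_UNIV:
  assumes "is_act act A"
  shows "act_ideal act A UNIV = A"
proof
  show "act_ideal act A UNIV \<subseteq> A" using assms unfolding is_act_def act_ideal_def by blast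
  show "A \<subseteq> act_ideal act A UNIV"
  proof
    fix x assume "x \<in> A"
    with assms have "x = act x 1" unfolding is_act_def by simp
    with \<open>x \<in> A\<close> show "x \<in> act_ideal act A UNIV" unfolding act_ideal_def by blast
  qed
qed

lemma act_ideal_act_ideal:
  assumes "is_act act A"
  shows "act_ideal act (act_ideal act A I) I = act_ideal act A (ideal_sq I)"
proof -
  have assoc: "act (act x s) t = act x (s * t)" if "x \<in> A" for x s t
    using assms that unfolding is_act_def by simp
  show ?thesis
  proof
    show "act_ideal act (act_ideal act A I) I \<subseteq> act_ideal act A (ideal_sq I)"
    proof
      fix y assume "y \<in> act_ideal act (act_ideal act A I) I"
      then obtain x s t where "x \<in> A" "s \<in> I" "t \<in> I" "y = act x (s * t)"
        unfolding act_ideal_def by (auto simp: assoc)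
      then show "y \<in> act_ideal act A (ideal_sq I)" unfolding act_ideal_def ideal_sq_def by blast
    qed
    show "act_ideal act A (ideal_sq I) \<subseteq> act_ideal act (act_ideal act A I) I"
    proof
      fix y assume "y \<in> act_ideal act A (ideal_sq I)"
      then obtain x s t where "x \<in> A" "s \<in> I" "t \<in> I" "y = act (act x s) t"
        unfolding act_ideal_def ideal_sq_def by (auto simp: assoc)
      then show "y \<in> act_ideal act (act_ideal act A I) I" unfolding act_ideal_def by blast
    qed
  qed
qed

lemma image_act_ideal:
  assumes "bij_betw f X Y" and "\<forall>x\<in>X. \<forall>s. f (act x s) = act (f x) s"
  shows "f ` act_ideal act X I = act_ideal act Y I"
proof -
  have "f ` act_ideal act X I = {act (f x) s | x s. x \<in> X \<and> s \<in> I}"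
    using assms(2) unfolding act_ideal_def by (auto simp: image_iff) metis
  also have "\<dots> = act_ideal act Y I"
    using assms(1) unfolding act_ideal_def bij_betw_def by blast
  finally show ?thesis .
qed

lemma maximal_subact_Un_orbit:
  assumes act: "is_act act A" and maxB: "maximal_subact act B A" and a: "a \<in> A" "a \<notin> B"
  shows "A = B \<union> range (act a)"
proof -
  have assoc: "act (act a t) s = act a (t * s)" for t s
    using act a unfolding is_act_def by simp
  have B: "B \<subseteq> A" "\<forall>b\<in>B. \<forall>s. act b s \<in> B"
    using maxB unfolding maximal_subact_def subact_def by auto
  have "range (act a) \<subseteq> A" using act a unfolding is_act_def by blast
  moreover have "act x s \<in> B \<union> range (act a)" if "x \<in> B \<union> range (act a)" for x s
    using that B(2) assoc by auto
  ultimately have "subact act (B \<union> range (act a)) A" using B(1) unfolding subact_def by blast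
  moreover have "a \<in> range (act a)" using act a unfolding is_act_def by (metis rangeI)
  moreover have "B \<subseteq> B \<union> range (act a)" by blast
  ultimately have "B \<union> range (act a) = A \<or> B \<union> range (act a) = B"
    using maxB unfolding maximal_subact_def by blast
  with \<open>a \<in> range (act a)\<close> a(2) show ?thesis by blast
qed

lemma right_ideal_subset_maxRI:
  fixes I :: "'a::monoid_mult set"
  assumes "right_ideal I" and "I \<noteq> UNIV"
  shows "I \<subseteq> maxRI"
proof
  fix s assume s: "s \<in> I"
  show "s \<in> maxRI" unfolding maxRI_def
  proof (rule CollectI, rule ccontr)
    assume "\<not> (\<forall>t. s * t \<noteq> 1)"
    then obtain t where "s * t = 1" by auto
    with s assms(1) have "1 \<in> I" unfolding right_ideal_def by metis
    with assms(1) have "I = UNIV" unfolding right_ideal_def by (metis UNIV_eq_I mult_1)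
    with assms(2) show False by contradiction
  qed
qed

lemma act_ideal_eq_if_act_iso:
  assumes "is_act act A" and "ideal_sq I = I" and "act_iso act (act_ideal act A I) A"
  shows "act_ideal act A I = A"
proof -
  let ?X = "act_ideal act A I"
  from assms(3) obtain f where bij: "bij_betw f ?X A"
    and hom: "\<forall>x\<in>?X. \<forall>s. f (act x s) = act (f x) s"
    unfolding act_iso_def by blast
  have "A = f ` ?X" using bij by (simp add: bij_betw_def)
  also have "\<dots> = f ` act_ideal act ?X I"
    using act_ideal_act_ideal[OF assms(1)] assms(2) by simp
  also have "\<dots> = ?X" using image_act_ideal[OF bij hom] .
  finally show ?thesis by simp
qed

lemma act_ideal_maxRI_subset:
  fixes act :: "'b \<Rightarrow> 'a::monoid_mult \<Rightarrow> 'b"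
  assumes act: "is_act act A" and maxB: "maximal_subact act B A"
    and twosided: "left_ideal (maxRI :: 'a set)"
    and a: "a \<in> A - B" and aM: "maxRI = {s. act a s \<in> B}"
  shows "act_ideal act A maxRI \<subseteq> B"
proof -
  have A: "A = B \<union> range (act a)" using maximal_subact_Un_orbit[OF act maxB] a by blast
  have "act x s \<in> B" if x: "x \<in> A" and s: "s \<in> maxRI" for x s
  proof -
    from x consider "x \<in> B" | t where "x = act a t" by (subst (asm) A) blast
    then show ?thesis
    proof cases
      case 1
      with maxB show ?thesis unfolding maximal_subact_def subact_def by simp
    next
      case 2
      then have "act x s = act a (t * s)" using act a unfolding is_act_def by simp
      moreover have "t * s \<in> maxRI" using twosided s unfolding left_ideal_def by blast
      then have "act a (t * s) \<in> B" by (subst (asm) aM) simp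
      ultimately show ?thesis by simp
    qed
  qed
  then show ?thesis unfolding act_ideal_def by blast
qed

theorem proposition3p1:
  fixes act :: "'b \<Rightarrow> 'a::monoid_mult \<Rightarrow> 'b" and A B :: "'b set"
  assumes nonunit: "\<exists>s::'a. \<forall>t. s * t \<noteq> 1"
    and twosided: "left_ideal (maxRI :: 'a set)"
    and act: "is_act act A"
    and maxB: "maximal_subact act B A"
    and a: "\<exists>a\<in>A - B. maxRI = {s. act a s \<in> B}"
  shows "(\<forall>I. right_ideal I \<and> I \<noteq> UNIV \<and> ideal_sq I = I \<longrightarrow> \<not> act_iso act (act_ideal act A I) A)
    \<and> (\<forall>I. right_ideal I \<longrightarrow> (act_ideal act A I = A \<longleftrightarrow> I = UNIV))
    \<and> (\<forall>I. right_ideal I \<and> ideal_sq I = I \<longrightarrow> (act_iso act (act_ideal act A I) A \<longleftrightarrow> I = UNIV))"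
proof -
  have AM_B: "act_ideal act A maxRI \<subseteq> B"
    using a act_ideal_maxRI_subset[OF act maxB twosided] by blast
  have AI_eq_A_iff: "act_ideal act A I = A \<longleftrightarrow> I = UNIV" if I: "right_ideal I" for I :: "'a set"
  proof
    assume AI: "act_ideal act A I = A"
    show "I = UNIV"
    proof (rule ccontr)
      assume "I \<noteq> UNIV"
      with I have "I \<subseteq> maxRI" by (rule right_ideal_subset_maxRI)
      then have "act_ideal act A I \<subseteq> act_ideal act A maxRI" unfolding act_ideal_def by blast
      with AI AM_B have "A \<subseteq> B" by simp
      then show False using maxB unfolding maximal_subact_def subact_def by blast
    qed
  qed (simp add: act_ideal_UNIV[OF act])
  have "act_iso act A A" unfolding act_iso_def by (rule exI[of _ id]) simp
  then have AI_iso_A_iff: "act_iso act (act_ideal act A I) A \<longleftrightarrow> I = UNIV"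
    if "right_ideal I" and "ideal_sq I = I" for I :: "'a set"
    using that AI_eq_A_iff act_ideal_eq_if_act_iso[OF act] act_ideal_UNIV[OF act] by metis
  show ?thesis using AI_eq_A_iff AI_iso_A_iff by blast
qed

end
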